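(* Let $H$ be a Hamiltonian (Hermitian operator) on a qubit $\mathbb{C}^2$ with incoherent basis $\{\ket{0},\ket{1}\}$, and let $H_{10}=\bra{1}H\ket{0}$. Then \[ C_{\mathrm{gen}}(H)=\max_{p\in[0,1]} 2\left|H_{10}\right|\sqrt{p(1-p)}\,\log_{2}\frac{1-p}{p}, \] and the maximum in the definition of $C_{\mathrm{gen}}(H)$ can be attained by a pure state.
   Context: The dephasing map is $\Delta(\rho)=\sum_{i}\ket{i}\!\bra{i}\rho\ket{i}\!\bra{i}$. The relative entropy of coherence of a state $\rho$ is $C_\mathrm{r}(\rho)=S(\Delta(\rho))-S(\rho)$, where $S(\rho)=-\mathrm{Tr}[\rho\log_2\rho]$. The coherence generating capacity of a Hamiltonian $H$ is \[ C_{\mathrm{gen}}(H)=\max_{\rho}\left.\frac{d}{dt}C_{\mathrm{r}}\big(e^{-iHt}\rho e^{iHt}\big)\right|_{t=0}, \] the maximum over all qubit density matrices $\rho$; the variable $p$ plays the role of the diagonal entry $\rho_{00}=\bra{0}\rho\ket{0}$. *)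

theory Defs
  imports "HOL-Analysis.Analysis"
begin

text \<open>Qubit operators: 2x2 complex matrices indexed by the type 2 = {0,1};
  index 0 is ket 0 and index 1 is ket 1 (the incoherent basis).\<close>

type_synonym qmat = "complex^2^2"

definition adj :: "qmat \<Rightarrow> qmat" where
  "adj A = (\<chi> i j. cnj (A $ j $ i))"

definition hermitian :: "qmat \<Rightarrow> bool" where
  "hermitian A \<longleftrightarrow> adj A = A"

definition unitary :: "qmat \<Rightarrow> bool" where
  "unitary U \<longleftrightarrow> adj U ** U = mat 1"

definition diagm :: "(2 \<Rightarrow> complex) \<Rightarrow> qmat" where
  "diagm d = (\<chi> i j. if i = j then d i else 0)"

definition mfun :: "(real \<Rightarrow> complex) \<Rightarrow> qmat \<Rightarrow> qmat" where
  "mfun f A = (THE B. \<exists>U d. unitary U \<and> A = U ** diagm (\<lambda>i. complex_of_real (d i)) ** adj U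
                          \<and> B = U ** diagm (\<lambda>i. f (d i)) ** adj U)"

definition density_matrix :: "qmat \<Rightarrow> bool" where
  "density_matrix \<rho> \<longleftrightarrow> hermitian \<rho> \<and> trace \<rho> = 1 \<and>
     (\<forall>x::complex^2. 0 \<le> Re (\<Sum>i\<in>UNIV. \<Sum>j\<in>UNIV. cnj (x $ i) * \<rho> $ i $ j * x $ j))"

definition vN_entropy :: "qmat \<Rightarrow> real" where
  "vN_entropy \<rho> = - Re (trace (\<rho> ** mfun (\<lambda>x. complex_of_real (log 2 x)) \<rho>))"

definition dephase :: "qmat \<Rightarrow> qmat" where
  "dephase \<rho> = (\<chi> i j. if i = j then \<rho> $ i $ i else 0)"

definition coh_rel :: "qmat \<Rightarrow> real" where
  "coh_rel \<rho> = vN_entropy (dephase \<rho>) - vN_entropy \<rho>"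

definition evolve :: "qmat \<Rightarrow> real \<Rightarrow> qmat \<Rightarrow> qmat" where
  "evolve H t \<rho> = mfun (\<lambda>x. exp (- \<i> * complex_of_real (x * t))) H ** \<rho>
                   ** mfun (\<lambda>x. exp (\<i> * complex_of_real (x * t))) H"

definition coh_rate :: "qmat \<Rightarrow> qmat \<Rightarrow> real" where
  "coh_rate H \<rho> = deriv (\<lambda>t. coh_rel (evolve H t \<rho>)) 0"

definition C_gen :: "qmat \<Rightarrow> real" where
  "C_gen H = Sup {coh_rate H \<rho> | \<rho>. density_matrix \<rho>}"

definition pure_state :: "complex^2 \<Rightarrow> qmat" where
  "pure_state \<psi> = (\<chi> i j. \<psi> $ i * cnj (\<psi> $ j))"

end

theory Submission
  imports Defs "HOL-Real_Asymp.Real_Asymp"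
begin

text \<open>
  Unitary evolution leaves \<open>S(\<rho>)\<close> unchanged, so along \<open>\<rho>\<^sub>t = e\<^sup>-\<^sup>i\<^sup>H\<^sup>t \<rho> e\<^sup>i\<^sup>H\<^sup>t\<close> the relative
  entropy of coherence is \<open>h(p\<^sub>t) - S(\<rho>)\<close>, where \<open>h\<close> is the binary entropy and \<open>p\<^sub>t = \<langle>0|\<rho>\<^sub>t|0\<rangle>\<close>.
  For \<open>0 < p < 1\<close> the chain rule gives the rate \<open>log\<^sub>2((1-p)/p) \<cdot> 2 Im(H\<^sub>0\<^sub>1 \<rho>\<^sub>1\<^sub>0)\<close>, and
  positivity of \<open>\<rho>\<close> gives \<open>|\<rho>\<^sub>1\<^sub>0|\<^sup>2 \<le> p(1-p)\<close>; hence the rate is at most \<open>|g(p)|\<close>, and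
  \<open>g(1-p) = -g(p)\<close> turns this into \<open>max g\<close>. For \<open>p \<in> {0,1}\<close> the state is a basis projector,
  the population leaking into the other basis state is \<open>O(t\<^sup>2)\<close>, and \<open>h\<close> of it is \<open>o(t)\<close>, so the
  rate is \<open>0\<close>. Finally \<open>\<surd>p |0\<rangle> + w \<surd>(1-p) |1\<rangle>\<close>, with the phase \<open>w\<close> aligned to \<open>H\<^sub>0\<^sub>1\<close>,
  attains \<open>g(p)\<close> exactly.
\<close>

section \<open>Qubit matrices in coordinates\<close>

lemma UNIV_2_zero_one: "(UNIV :: 2 set) = {0, 1}"
  using exhaust_2 by fastforce

lemma sum_UNIV_2: "(\<Sum>i\<in>UNIV. f i) = f (0::2) + f 1"
  by (simp add: UNIV_2_zero_one)

lemma forall_UNIV_2: "(\<forall>i::2. P i) \<longleftrightarrow> P 0 \<and> P 1"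
  by (metis UNIV_2_zero_one UNIV_I insertE singletonD)

definition mat2 :: "complex \<Rightarrow> complex \<Rightarrow> complex \<Rightarrow> complex \<Rightarrow> qmat" where
  "mat2 a b c d = (\<chi> i j. if i = 0 then (if j = 0 then a else b) else (if j = 0 then c else d))"

lemma mat2_nth [simp]:
  "mat2 a b c d $ 0 $ 0 = a" "mat2 a b c d $ 0 $ 1 = b"
  "mat2 a b c d $ 1 $ 0 = c" "mat2 a b c d $ 1 $ 1 = d"
  by (simp_all add: mat2_def)

lemma mat2_entries: "A = mat2 (A$0$0) (A$0$1) (A$1$0) (A$1$1)"
  by (simp add: vec_eq_iff forall_UNIV_2)

lemma mat2_cases: obtains a b c d where "A = mat2 a b c d"
  using mat2_entries by blast

lemma mat2_eq_iff [simp]: "mat2 a b c d = mat2 a' b' c' d' \<longleftrightarrow> a = a' \<and> b = b' \<and> c = c' \<and> d = d'"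
  by (metis mat2_nth)

lemma mat2_mult [simp]:
  "mat2 a b c d ** mat2 a' b' c' d' = mat2 (a*a' + b*c') (a*b' + b*d') (c*a' + d*c') (c*b' + d*d')"
  by (simp add: vec_eq_iff forall_UNIV_2 matrix_matrix_mult_def sum_UNIV_2)

lemma adj_mat2 [simp]: "adj (mat2 a b c d) = mat2 (cnj a) (cnj c) (cnj b) (cnj d)"
  by (simp add: vec_eq_iff forall_UNIV_2 adj_def)

lemma trace_mat2 [simp]: "trace (mat2 a b c d) = a + d"
  by (simp add: trace_def sum_UNIV_2)

lemma diagm_mat2: "diagm e = mat2 (e 0) 0 0 (e 1)"
  by (simp add: vec_eq_iff forall_UNIV_2 diagm_def)

lemma mat_1_mat2: "mat 1 = mat2 1 0 0 1"
  by (simp add: vec_eq_iff forall_UNIV_2 mat_def)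

lemma adj_mult: "adj (A ** B) = adj B ** adj A"
  by (cases A rule: mat2_cases; cases B rule: mat2_cases) (simp add: algebra_simps)

lemma adj_adj [simp]: "adj (adj A) = A"
  by (cases A rule: mat2_cases) simp

lemma adj_diagm: "adj (diagm e) = diagm (\<lambda>i. cnj (e i))"
  by (simp add: diagm_mat2)

lemma hermitian_entry_sym:
  assumes "hermitian A" shows "A $ j $ i = cnj (A $ i $ j)"
proof -
  have "A $ j $ i = adj A $ j $ i" using assms by (simp add: hermitian_def)
  then show ?thesis by (simp add: adj_def)
qed

lemma hermitian_diag_real: "hermitian A \<Longrightarrow> complex_of_real (Re (A $ i $ i)) = A $ i $ i"
  using hermitian_entry_sym[of A i i] by (simp add: complex_eq_iff)

lemma hermitian_unitary_conj: "hermitian A \<Longrightarrow> hermitian (W ** A ** adj W)"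
  unfolding hermitian_def by (simp add: adj_mult matrix_mul_assoc)

lemma unitary_mat2:
  "unitary (mat2 a b c d) \<longleftrightarrow>
     cnj a * a + cnj c * c = 1 \<and> cnj b * b + cnj d * d = 1 \<and> cnj a * b + cnj c * d = 0"
proof -
  have "cnj b * a + cnj d * c = cnj (cnj a * b + cnj c * d)" by simp
  then have "cnj b * a + cnj d * c = 0 \<longleftrightarrow> cnj a * b + cnj c * d = 0"
    by (simp only: complex_cnj_zero_iff)
  then show ?thesis
    unfolding unitary_def mat_1_mat2 adj_mat2 mat2_mult mat2_eq_iff by auto
qed

lemma unitary_right_inverse: "unitary U \<Longrightarrow> U ** adj U = mat 1"
  unfolding unitary_def using matrix_left_right_inverse by blast

lemma unitary_mat_1: "unitary (mat 1)"
  by (simp add: unitary_def mat_1_mat2)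

lemma unitary_mult: "unitary U \<Longrightarrow> unitary V \<Longrightarrow> unitary (U ** V)"
  unfolding unitary_def adj_mult by (metis matrix_mul_assoc matrix_mul_lid)

lemma unitary_adj: "unitary U \<Longrightarrow> unitary (adj U)"
  by (simp add: unitary_def unitary_right_inverse)

lemma trace_unitary_conj: "unitary W \<Longrightarrow> trace (W ** X ** adj W) = trace X"
  unfolding unitary_def by (metis trace_mul_sym matrix_mul_assoc matrix_mul_lid)

section \<open>Spectral decomposition and functional calculus\<close>

lemma diagm_intertwine:
  fixes d d' :: "2 \<Rightarrow> real"
  assumes "W ** diagm (\<lambda>i. complex_of_real (d i)) = diagm (\<lambda>i. complex_of_real (d' i)) ** W"
  shows "W ** diagm (\<lambda>i. f (d i)) = diagm (\<lambda>i. f (d' i)) ** W"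
proof -
  have scalar: "x * f u = f v * x" if "x * complex_of_real u = complex_of_real v * x" for x u v
    using that by (cases "x = 0") (auto simp: mult.commute)
  obtain a b c e where W: "W = mat2 a b c e" by (rule mat2_cases)
  show ?thesis
    using assms by (simp add: W diagm_mat2 scalar)
qed

lemma mfun_spectral:
  assumes U: "unitary U" and A: "A = U ** diagm (\<lambda>i. complex_of_real (d i)) ** adj U"
  shows "mfun f A = U ** diagm (\<lambda>i. f (d i)) ** adj U"
  unfolding mfun_def
proof (rule the_equality)
  fix B assume "\<exists>U' d'. unitary U' \<and> A = U' ** diagm (\<lambda>i. complex_of_real (d' i)) ** adj U' \<and>
                  B = U' ** diagm (\<lambda>i. f (d' i)) ** adj U'"
  then obtain U' d' where U': "unitary U'" and A': "A = U' ** diagm (\<lambda>i. complex_of_real (d' i)) ** adj U'"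
    and B: "B = U' ** diagm (\<lambda>i. f (d' i)) ** adj U'" by blast
  define W where "W = adj U' ** U"
  have inv: "adj U ** U = mat 1" "U ** adj U = mat 1" "adj U' ** U' = mat 1" "U' ** adj U' = mat 1"
    using U U' by (simp_all add: unitary_def unitary_right_inverse)
  have "W ** diagm (\<lambda>i. complex_of_real (d i)) = adj U' ** A ** U"
    unfolding A W_def by (simp add: matrix_mul_assoc inv flip: matrix_mul_assoc[of _ "adj U"])
  also have "\<dots> = diagm (\<lambda>i. complex_of_real (d' i)) ** W"
    unfolding A' W_def by (simp add: matrix_mul_assoc inv flip: matrix_mul_assoc[of "adj U'"])
  finally have "W ** diagm (\<lambda>i. f (d i)) = diagm (\<lambda>i. f (d' i)) ** W"
    by (rule diagm_intertwine)
  moreover have "U' ** W = U" by (simp add: W_def inv matrix_mul_assoc)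
  moreover have "W ** adj U = adj U'" by (simp add: W_def inv flip: matrix_mul_assoc)
  ultimately show "B = U ** diagm (\<lambda>i. f (d i)) ** adj U"
    unfolding B by (metis matrix_mul_assoc)
qed (use assms in blast)

lemma cnj_mult_self: "cnj b * b = complex_of_real ((cmod b)\<^sup>2)"
  by (metis complex_norm_square mult.commute)

lemma cnj_mult_of_real_mult:
  "cnj (b * complex_of_real x) * (b * complex_of_real y) = complex_of_real ((cmod b)\<^sup>2 * x * y)"
proof -
  have "cnj (b * complex_of_real x) * (b * complex_of_real y) = (cnj b * b) * of_real x * of_real y"
    by (simp add: mult_ac)
  then show ?thesis by (simp only: cnj_mult_self of_real_mult)
qed

lemma unitary_diagonalizes:
  assumes "unitary U" "A ** U = U ** D"
  shows "A = U ** D ** adj U"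
proof -
  have "A = A ** (U ** adj U)" using assms(1) by (simp add: unitary_right_inverse)
  also have "\<dots> = U ** D ** adj U" by (simp add: matrix_mul_assoc assms(2))
  finally show ?thesis .
qed

lemma mat2_hermitian_eigenvectors:
  fixes \<alpha> \<gamma> :: real and \<mu> s :: "2 \<Rightarrow> real"
  assumes char: "\<And>i. (\<mu> i)\<^sup>2 + (\<alpha> - \<gamma>) * \<mu> i = (cmod b)\<^sup>2"
  defines "U \<equiv> mat2 (b * of_real (s 0)) (b * of_real (s 1)) (of_real (\<mu> 0 * s 0)) (of_real (\<mu> 1 * s 1))"
  shows "mat2 (of_real \<alpha>) b (cnj b) (of_real \<gamma>) ** U = U ** diagm (\<lambda>i. complex_of_real (\<alpha> + \<mu> i))"
proof -
  have eig: "cnj b * (b * of_real (s i)) + of_real \<gamma> * of_real (\<mu> i * s i)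
               = of_real (\<mu> i * s i) * of_real (\<alpha> + \<mu> i)" for i
  proof -
    have "\<mu> i * s i * (\<alpha> + \<mu> i) = s i * ((\<mu> i)\<^sup>2 + (\<alpha> - \<gamma>) * \<mu> i) + \<gamma> * (\<mu> i * s i)"
      by (simp add: algebra_simps power2_eq_square)
    then have real_eig: "(cmod b)\<^sup>2 * s i + \<gamma> * (\<mu> i * s i) = \<mu> i * s i * (\<alpha> + \<mu> i)"
      by (simp add: char)
    have "cnj b * (b * of_real (s i)) = of_real ((cmod b)\<^sup>2 * s i)"
      using cnj_mult_of_real_mult[of b 1 "s i"] by simp
    then have "cnj b * (b * of_real (s i)) + of_real \<gamma> * of_real (\<mu> i * s i)
                 = of_real ((cmod b)\<^sup>2 * s i + \<gamma> * (\<mu> i * s i))" by simp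
    also have "\<dots> = of_real (\<mu> i * s i) * of_real (\<alpha> + \<mu> i)" by (simp only: real_eig of_real_mult)
    finally show ?thesis .
  qed
  show ?thesis
    unfolding U_def diagm_mat2 mat2_mult mat2_eq_iff
    using eig[of 0] eig[of 1] by (simp add: algebra_simps)
qed

lemma unitary_mat2_eigenvectors:
  fixes \<mu> s :: "2 \<Rightarrow> real"
  assumes norm: "\<And>i. (s i)\<^sup>2 * ((cmod b)\<^sup>2 + (\<mu> i)\<^sup>2) = 1"
    and orth: "(cmod b)\<^sup>2 + \<mu> 0 * \<mu> 1 = 0"
  shows "unitary (mat2 (b * of_real (s 0)) (b * of_real (s 1)) (of_real (\<mu> 0 * s 0)) (of_real (\<mu> 1 * s 1)))"
proof -
  have "(cmod b)\<^sup>2 * s i * s i + \<mu> i * s i * (\<mu> i * s i) = 1" for i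
    using norm[of i] by (simp add: power2_eq_square algebra_simps)
  moreover have "(cmod b)\<^sup>2 * s 0 * s 1 + \<mu> 0 * s 0 * (\<mu> 1 * s 1) = s 0 * s 1 * ((cmod b)\<^sup>2 + \<mu> 0 * \<mu> 1)"
    by (simp add: algebra_simps)
  ultimately show ?thesis
    unfolding unitary_mat2 cnj_mult_of_real_mult complex_cnj_complex_of_real orth
    by (simp flip: of_real_mult of_real_add)
qed

lemma quadratic_root_identities:
  fixes \<delta> B :: real
  defines "r \<equiv> sqrt (\<delta>\<^sup>2 + B\<^sup>2)"
  shows "(r - \<delta>)\<^sup>2 + 2 * \<delta> * (r - \<delta>) = B\<^sup>2" and "(- r - \<delta>)\<^sup>2 + 2 * \<delta> * (- r - \<delta>) = B\<^sup>2"
    and "B\<^sup>2 + (r - \<delta>) * (- r - \<delta>) = 0"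
proof -
  have "r\<^sup>2 = \<delta>\<^sup>2 + B\<^sup>2" by (simp add: r_def)
  then show "(r - \<delta>)\<^sup>2 + 2 * \<delta> * (r - \<delta>) = B\<^sup>2" and "(- r - \<delta>)\<^sup>2 + 2 * \<delta> * (- r - \<delta>) = B\<^sup>2"
    and "B\<^sup>2 + (r - \<delta>) * (- r - \<delta>) = 0"
    by (simp_all add: power2_eq_square algebra_simps)
qed

lemma hermitian_diagonalizable:
  assumes "hermitian A"
  obtains U d where "unitary U" "A = U ** diagm (\<lambda>i. complex_of_real (d i)) ** adj U"
proof -
  define \<alpha> \<gamma> b where "\<alpha> = Re (A$0$0)" and "\<gamma> = Re (A$1$1)" and "b = A$0$1"
  have "A = mat2 (A$0$0) (A$0$1) (A$1$0) (A$1$1)" by (rule mat2_entries)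
  also have "\<dots> = mat2 (of_real \<alpha>) b (cnj b) (of_real \<gamma>)"
    unfolding \<alpha>_def \<gamma>_def b_def hermitian_diag_real[OF assms] hermitian_entry_sym[OF assms, of 1 0] ..
  finally have A: "A = mat2 (of_real \<alpha>) b (cnj b) (of_real \<gamma>)" .
  show ?thesis
  proof (cases "b = 0")
    case True
    have "A = mat 1 ** diagm (\<lambda>i. complex_of_real (if i = 0 then \<alpha> else \<gamma>)) ** adj (mat 1)"
      by (simp add: A True diagm_mat2 mat_1_mat2)
    with unitary_mat_1 show ?thesis by (rule that)
  next
    case False
    define B \<delta> where "B = cmod b" and "\<delta> = (\<alpha> - \<gamma>) / 2"
    define r where "r = sqrt (\<delta>\<^sup>2 + B\<^sup>2)"
    define \<mu> where "\<mu> = (\<lambda>i::2. if i = 0 then r - \<delta> else - r - \<delta>)"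
    define s where "s = (\<lambda>i. 1 / sqrt (B\<^sup>2 + (\<mu> i)\<^sup>2))"
    define U where "U = mat2 (b * of_real (s 0)) (b * of_real (s 1)) (of_real (\<mu> 0 * s 0)) (of_real (\<mu> 1 * s 1))"
    note roots = quadratic_root_identities[where \<delta> = \<delta> and B = B, folded r_def]
    have eig: "A ** U = U ** diagm (\<lambda>i. complex_of_real (\<alpha> + \<mu> i))"
      unfolding A U_def
    proof (rule mat2_hermitian_eigenvectors)
      have "\<alpha> - \<gamma> = 2 * \<delta>" by (simp add: \<delta>_def)
      with roots(1,2) show "(\<mu> i)\<^sup>2 + (\<alpha> - \<gamma>) * \<mu> i = (cmod b)\<^sup>2" for i
        unfolding B_def [symmetric] \<mu>_def by simp
    qed
    have uni: "unitary U"
      unfolding U_def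
    proof (rule unitary_mat2_eigenvectors)
      have "B > 0" using False by (simp add: B_def)
      then show "(s i)\<^sup>2 * ((cmod b)\<^sup>2 + (\<mu> i)\<^sup>2) = 1" for i
        unfolding B_def [symmetric] by (simp add: s_def power_divide)
      show "(cmod b)\<^sup>2 + \<mu> 0 * \<mu> 1 = 0"
        unfolding B_def [symmetric] \<mu>_def using roots(3) by simp
    qed
    from uni unitary_diagonalizes[OF uni eig] show ?thesis by (rule that)
  qed
qed

lemma mfun_unitary_conj:
  assumes W: "unitary W" and A: "hermitian A"
  shows "mfun f (W ** A ** adj W) = W ** mfun f A ** adj W"
proof -
  obtain U d where U: "unitary U" and Ad: "A = U ** diagm (\<lambda>i. complex_of_real (d i)) ** adj U"
    using hermitian_diagonalizable[OF A] .
  have "W ** A ** adj W = (W ** U) ** diagm (\<lambda>i. complex_of_real (d i)) ** adj (W ** U)"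
    by (simp add: Ad adj_mult matrix_mul_assoc)
  then have "mfun f (W ** A ** adj W) = (W ** U) ** diagm (\<lambda>i. f (d i)) ** adj (W ** U)"
    by (rule mfun_spectral[OF unitary_mult[OF W U]])
  also have "\<dots> = W ** mfun f A ** adj W"
    by (simp add: mfun_spectral[OF U Ad] adj_mult matrix_mul_assoc)
  finally show ?thesis .
qed

lemma vN_entropy_unitary_conj:
  assumes W: "unitary W" and A: "hermitian A"
  shows "vN_entropy (W ** A ** adj W) = vN_entropy A"
proof -
  let ?L = "mfun (\<lambda>x. complex_of_real (log 2 x)) A"
  have "adj W ** W = mat 1" using W by (simp add: unitary_def)
  then have "(W ** A ** adj W) ** (W ** ?L ** adj W) = W ** (A ** ?L) ** adj W"
    by (simp add: matrix_mul_assoc[symmetric]) (simp add: matrix_mul_assoc)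
  then show ?thesis
    unfolding vN_entropy_def mfun_unitary_conj[OF W A] by (simp add: trace_unitary_conj[OF W])
qed

section \<open>Density matrices and binary entropy\<close>

lemma quadratic_form_unitary_conj:
  "(\<Sum>i\<in>UNIV. \<Sum>j\<in>UNIV. cnj (x $ i) * (W ** R ** adj W) $ i $ j * x $ j)
     = (\<Sum>i\<in>UNIV. \<Sum>j\<in>UNIV. cnj ((adj W *v x) $ i) * R $ i $ j * (adj W *v x) $ j)"
  by (cases R rule: mat2_cases; cases W rule: mat2_cases)
    (simp add: sum_UNIV_2 matrix_vector_mult_def algebra_simps)

lemma density_matrix_unitary_conj:
  assumes W: "unitary W" and R: "density_matrix R"
  shows "density_matrix (W ** R ** adj W)"
  using assms unfolding density_matrix_def quadratic_form_unitary_conj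
  by (simp add: hermitian_unitary_conj trace_unitary_conj)

lemma density_matrixE:
  assumes "density_matrix R"
  obtains p c where "R = mat2 (of_real p) (cnj c) c (of_real (1 - p))"
    and "0 \<le> p" and "p \<le> 1" and "(cmod c)\<^sup>2 \<le> p * (1 - p)"
proof -
  define p c where "p = Re (R$0$0)" and "c = R$1$0"
  have herm: "hermitian R" and tr: "trace R = 1"
    and pos: "\<And>x. 0 \<le> Re (\<Sum>i\<in>UNIV. \<Sum>j\<in>UNIV. cnj (x $ i) * R $ i $ j * x $ j)"
    using assms unfolding density_matrix_def by auto
  have "R = mat2 (R$0$0) (R$0$1) (R$1$0) (R$1$1)" by (rule mat2_entries)
  also have "\<dots> = mat2 (of_real p) (cnj c) c (of_real (1 - p))"
    using tr hermitian_diag_real[OF herm, of 0] hermitian_diag_real[OF herm, of 1]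
    unfolding p_def c_def hermitian_entry_sym[OF herm, of 0 1]
    by (subst (asm) mat2_entries) (simp add: complex_eq_iff)
  finally have R: "R = mat2 (of_real p) (cnj c) c (of_real (1 - p))" .
  have form: "0 \<le> Re (of_real p * (cnj x0 * x0) + cnj x0 * cnj c * x1 + cnj x1 * c * x0
                         + of_real (1 - p) * (cnj x1 * x1))" for x0 x1
    using pos[of "\<chi> k. if k = 0 then x0 else x1"] by (simp add: R sum_UNIV_2 algebra_simps)
  have "0 \<le> p" using form[of 1 0] by simp
  moreover have "p \<le> 1" using form[of 0 1] by simp
  moreover have "(cmod c)\<^sup>2 \<le> p * (1 - p)"
  proof -
    have "0 \<le> p * (p * (1 - p) - (cmod c)\<^sup>2)"
      unfolding cmod_power2 using form[of "- cnj c" "of_real p"] by (simp add: algebra_simps power2_eq_square)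
    moreover have "0 \<le> (1 - p) * (p * (1 - p) - (cmod c)\<^sup>2)"
      unfolding cmod_power2 using form[of "of_real (1 - p)" "- c"] by (simp add: algebra_simps power2_eq_square)
    ultimately show ?thesis
      by (cases "p = 0") (auto simp: zero_le_mult_iff)
  qed
  ultimately show ?thesis using R that by blast
qed

lemma vN_entropy_diagm:
  "vN_entropy (diagm (\<lambda>i. complex_of_real (q i))) = - (q 0 * log 2 (q 0) + q 1 * log 2 (q 1))"
proof -
  have "diagm (\<lambda>i. complex_of_real (q i)) = mat 1 ** diagm (\<lambda>i. complex_of_real (q i)) ** adj (mat 1)"
    unfolding mat_1_mat2 by (simp add: diagm_mat2)
  from mfun_spectral[OF unitary_mat_1 this]
  have "mfun (\<lambda>x. complex_of_real (log 2 x)) (diagm (\<lambda>i. complex_of_real (q i))) =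
        diagm (\<lambda>i. complex_of_real (log 2 (q i)))"
    by (simp add: mat_1_mat2 diagm_mat2)
  then show ?thesis unfolding vN_entropy_def by (simp add: diagm_mat2)
qed

text \<open>With \<open>log 2 0 = 0\<close> in HOL, the convention \<open>0 log 0 = 0\<close> is built in.\<close>

definition binary_entropy :: "real \<Rightarrow> real" where
  "binary_entropy x = - (x * log 2 x + (1 - x) * log 2 (1 - x))"

lemma binary_entropy_0 [simp]: "binary_entropy 0 = 0"
  by (simp add: binary_entropy_def)

lemma binary_entropy_one_minus: "binary_entropy (1 - x) = binary_entropy x"
  by (simp add: binary_entropy_def algebra_simps)

lemma binary_entropy_nonneg:
  assumes "0 \<le> x" "x \<le> 1"
  shows "0 \<le> binary_entropy x"
proof -
  have "y * log 2 y \<le> 0" if "0 \<le> y" "y \<le> 1" for y :: real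
    using that by (cases "y = 0") (auto intro: mult_nonneg_nonpos)
  from this[of x] this[of "1 - x"] assms show ?thesis
    unfolding binary_entropy_def by simp
qed

lemma binary_entropy_has_real_derivative:
  assumes "0 < x" "x < 1"
  shows "(binary_entropy has_real_derivative log 2 ((1 - x) / x)) (at x)"
proof -
  have "(binary_entropy has_real_derivative log 2 (1 - x) - log 2 x) (at x)"
    unfolding binary_entropy_def [abs_def] using assms by (auto intro!: derivative_eq_intros)
  then show ?thesis using assms by (simp add: log_divide)
qed

lemma binary_entropy_mono:
  assumes "0 \<le> x" "x \<le> y" "y \<le> 1/2"
  shows "binary_entropy x \<le> binary_entropy y"
proof (cases "x = 0")
  case True
  then show ?thesis using binary_entropy_nonneg[of y] assms by simp
next
  case False
  show ?thesis
  proof (rule deriv_nonneg_imp_mono[of x y _ "\<lambda>z. log 2 ((1 - z) / z)"])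
    fix z assume z: "z \<in> {x..y}"
    then have "0 < z" "z \<le> 1/2" using False assms by auto
    then show "(binary_entropy has_real_derivative log 2 ((1 - z) / z)) (at z)"
      by (intro binary_entropy_has_real_derivative) auto
    from \<open>0 < z\<close> \<open>z \<le> 1/2\<close> have "1 \<le> (1 - z) / z" by (simp add: field_simps)
    then show "0 \<le> log 2 ((1 - z) / z)" by simp
  qed (use assms in auto)
qed

lemma binary_entropy_quadratic_has_real_derivative_0:
  assumes bound: "\<forall>\<^sub>F t in at 0. 0 \<le> q t \<and> q t \<le> K * t\<^sup>2" and q0: "q 0 = 0"
  shows "((\<lambda>t. binary_entropy (q t)) has_real_derivative 0) (at 0)"
proof -
  define K' where "K' = \<bar>K\<bar> + 1"
  have "K' > 0" by (simp add: K'_def)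
  have "((\<lambda>t::real. K' * t\<^sup>2) \<longlongrightarrow> K' * 0\<^sup>2) (at 0)" by (intro tendsto_intros)
  then have "\<forall>\<^sub>F t in at (0::real). K' * t\<^sup>2 < 1/2" by (rule order_tendstoD) simp
  with bound have "\<forall>\<^sub>F t in at 0. norm (binary_entropy (q t) / t) \<le> binary_entropy (K' * t\<^sup>2) / \<bar>t\<bar>"
  proof eventually_elim
    case (elim t)
    have "K * t\<^sup>2 \<le> K' * t\<^sup>2" by (intro mult_right_mono) (auto simp: K'_def)
    with elim have "binary_entropy (q t) \<le> binary_entropy (K' * t\<^sup>2)" "0 \<le> binary_entropy (q t)"
      by (auto intro!: binary_entropy_mono binary_entropy_nonneg)
    then show ?case by (simp add: divide_right_mono)
  qed
  moreover have "((\<lambda>t::real. binary_entropy (K' * t\<^sup>2) / \<bar>t\<bar>) \<longlongrightarrow> 0) (at 0)"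
    unfolding binary_entropy_def using \<open>K' > 0\<close> by real_asymp
  ultimately have "((\<lambda>t. binary_entropy (q t) / t) \<longlongrightarrow> 0) (at 0)"
    by (rule Lim_null_comparison)
  then show ?thesis by (simp add: DERIV_def q0)
qed

lemma vN_entropy_dephase:
  assumes "density_matrix R"
  shows "vN_entropy (dephase R) = binary_entropy (Re (R $ 0 $ 0))"
proof -
  obtain p c where R: "R = mat2 (of_real p) (cnj c) c (of_real (1 - p))"
    using density_matrixE[OF assms] by metis
  have "dephase R = diagm (\<lambda>i. complex_of_real (if i = 0 then p else 1 - p))"
    by (simp add: R dephase_def diagm_mat2 vec_eq_iff forall_UNIV_2)
  then show ?thesis by (simp add: vN_entropy_diagm binary_entropy_def R)
qed

lemma binary_entropy_diag:
  assumes "density_matrix R"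
  shows "binary_entropy (Re (R $ k $ k)) = binary_entropy (Re (R $ 0 $ 0))"
proof -
  obtain p c where R: "R = mat2 (of_real p) (cnj c) c (of_real (1 - p))"
    using density_matrixE[OF assms] by metis
  have "k = 0 \<or> k = 1" using UNIV_2_zero_one by auto
  then show ?thesis by (auto simp: R binary_entropy_one_minus)
qed

section \<open>Unitary evolution\<close>

text \<open>Allowing complex times makes the matrix
  entries holomorphic, so their derivatives can be taken in \<open>\<complex>\<close> and restricted to real \<open>t\<close>.\<close>

definition propagator :: "qmat \<Rightarrow> (2 \<Rightarrow> real) \<Rightarrow> complex \<Rightarrow> qmat" where
  "propagator U d z = U ** diagm (\<lambda>k. exp (z * complex_of_real (d k))) ** adj U"

lemma evolve_eq_propagator:
  assumes U: "unitary U" and H: "H = U ** diagm (\<lambda>i. complex_of_real (d i)) ** adj U"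
  shows "evolve H t R = propagator U d (- \<i> * of_real t) ** R ** propagator U d (\<i> * of_real t)"
  unfolding evolve_def propagator_def mfun_spectral[OF U H] by (simp add: mult_ac)

lemma adj_propagator: "adj (propagator U d z) = propagator U d (cnj z)"
  by (simp add: propagator_def adj_mult adj_diagm exp_cnj matrix_mul_assoc)

lemma propagator_0: "unitary U \<Longrightarrow> propagator U d 0 = mat 1"
  by (simp add: propagator_def diagm_mat2 unitary_right_inverse flip: mat_1_mat2)

lemma unitary_propagator:
  assumes U: "unitary U" and z: "Re z = 0"
  shows "unitary (propagator U d z)"
proof -
  have "cnj (exp (z * of_real x)) * exp (z * of_real x) = 1" for x
  proof -
    have "cnj (z * of_real x) + z * of_real x = 0" using z by (simp add: complex_eq_iff)
    then show ?thesis by (simp add: exp_cnj flip: exp_add)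
  qed
  then have "unitary (diagm (\<lambda>k. exp (z * complex_of_real (d k))))"
    by (simp add: diagm_mat2 unitary_mat2)
  then show ?thesis
    unfolding propagator_def by (intro unitary_mult U unitary_adj)
qed

lemma evolve_unitary_conj:
  assumes "hermitian H"
  obtains W where "unitary W" "\<And>R. evolve H t R = W ** R ** adj W"
proof -
  obtain U d where U: "unitary U" and H: "H = U ** diagm (\<lambda>i. complex_of_real (d i)) ** adj U"
    using hermitian_diagonalizable[OF assms] .
  have "unitary (propagator U d (- \<i> * of_real t))" by (rule unitary_propagator[OF U]) simp
  moreover have "evolve H t R = propagator U d (- \<i> * of_real t) ** R ** adj (propagator U d (- \<i> * of_real t))" for R
    by (simp add: evolve_eq_propagator[OF U H] adj_propagator)
  ultimately show ?thesis by (rule that)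
qed

lemma density_matrix_evolve: "hermitian H \<Longrightarrow> density_matrix R \<Longrightarrow> density_matrix (evolve H t R)"
  by (metis evolve_unitary_conj density_matrix_unitary_conj)

lemma coh_rel_evolve:
  assumes H: "hermitian H" and R: "density_matrix R"
  shows "coh_rel (evolve H t R) = binary_entropy (Re (evolve H t R $ 0 $ 0)) - vN_entropy R"
proof -
  obtain W where W: "unitary W" and ev: "evolve H t R = W ** R ** adj W"
    using evolve_unitary_conj[OF H] by metis
  have "hermitian R" using R by (simp add: density_matrix_def)
  then show ?thesis
    unfolding coh_rel_def vN_entropy_dephase[OF density_matrix_evolve[OF H R]]
    by (simp add: ev vN_entropy_unitary_conj[OF W])
qed

section \<open>The coherence generation rate\<close>

definition has_entrywise_derivative :: "(complex \<Rightarrow> qmat) \<Rightarrow> qmat \<Rightarrow> complex \<Rightarrow> bool" where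
  "has_entrywise_derivative A A' z \<longleftrightarrow>
     (\<forall>i j. ((\<lambda>z. A z $ i $ j) has_field_derivative A' $ i $ j) (at z))"

lemma has_entrywise_derivative_mult:
  assumes "has_entrywise_derivative A A' z" "has_entrywise_derivative B B' z"
  shows "has_entrywise_derivative (\<lambda>z. A z ** B z) (A' ** B z + A z ** B') z"
  using assms unfolding has_entrywise_derivative_def
  by (auto simp: matrix_matrix_mult_def sum_UNIV_2 algebra_simps intro!: derivative_eq_intros)

lemma has_entrywise_derivative_mult_left:
  assumes "has_entrywise_derivative B B' z"
  shows "has_entrywise_derivative (\<lambda>z. C ** B z) (C ** B') z"
  using assms unfolding has_entrywise_derivative_def
  by (auto simp: matrix_matrix_mult_def sum_UNIV_2 intro!: derivative_eq_intros)

lemma has_entrywise_derivative_mult_right: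
  assumes "has_entrywise_derivative B B' z"
  shows "has_entrywise_derivative (\<lambda>z. B z ** C) (B' ** C) z"
  using assms unfolding has_entrywise_derivative_def
  by (auto simp: matrix_matrix_mult_def sum_UNIV_2 algebra_simps intro!: derivative_eq_intros)

lemma has_entrywise_derivative_diagm_exp:
  "has_entrywise_derivative (\<lambda>z. diagm (\<lambda>k. exp (c k * z))) (diagm (\<lambda>k. c k * exp (c k * z))) z"
  unfolding has_entrywise_derivative_def diagm_def
  by (auto intro!: derivative_eq_intros)

lemma propagator_has_derivative_0:
  assumes H: "H = U ** diagm (\<lambda>i. complex_of_real (d i)) ** adj U"
  shows "has_entrywise_derivative (\<lambda>z. propagator U d (c * z)) (\<chi> i j. c * H $ i $ j) 0"
proof -
  have "has_entrywise_derivative (\<lambda>z. U ** diagm (\<lambda>k. exp (c * of_real (d k) * z)) ** adj U)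
          (U ** diagm (\<lambda>k. c * of_real (d k) * exp (c * of_real (d k) * 0)) ** adj U) 0"
    by (intro has_entrywise_derivative_mult_left has_entrywise_derivative_mult_right
        has_entrywise_derivative_diagm_exp)
  moreover have "U ** diagm (\<lambda>k. c * of_real (d k) * exp (c * of_real (d k) * 0)) ** adj U
                   = (\<chi> i j. c * H $ i $ j)"
  proof -
    obtain u0 u1 u2 u3 where U: "U = mat2 u0 u1 u2 u3" by (rule mat2_cases)
    show ?thesis unfolding H U by (simp add: diagm_mat2 vec_eq_iff forall_UNIV_2 algebra_simps)
  qed
  moreover have "propagator U d (c * z) = U ** diagm (\<lambda>k. exp (c * of_real (d k) * z)) ** adj U" for z
    by (simp add: propagator_def mult_ac)
  ultimately show ?thesis by simp
qed

lemma evolve_0: "hermitian H \<Longrightarrow> evolve H 0 R = R"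
  by (metis evolve_eq_propagator hermitian_diagonalizable propagator_0 matrix_mul_lid matrix_mul_rid
      mult_zero_right of_real_0)

lemma evolve_diag_has_real_derivative:
  assumes H: "hermitian H" and R: "hermitian R"
  shows "((\<lambda>t. Re (evolve H t R $ 0 $ 0)) has_real_derivative 2 * Im (H $ 0 $ 1 * R $ 1 $ 0)) (at 0)"
proof -
  obtain U d where U: "unitary U" and Hd: "H = U ** diagm (\<lambda>i. complex_of_real (d i)) ** adj U"
    using hermitian_diagonalizable[OF H] .
  define E F where "E = (\<lambda>z. propagator U d (- \<i> * z))" and "F = (\<lambda>z. propagator U d (\<i> * z))"
  define D where "D = (\<chi> i j. - \<i> * H $ i $ j) ** R ** F 0 + E 0 ** R ** (\<chi> i j. \<i> * H $ i $ j)"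
  have "has_entrywise_derivative (\<lambda>z. E z ** R ** F z) D 0"
    unfolding D_def E_def F_def
    by (intro has_entrywise_derivative_mult has_entrywise_derivative_mult_right
        propagator_has_derivative_0[OF Hd])
  then have "((\<lambda>z. (E z ** R ** F z) $ 0 $ 0) has_field_derivative D $ 0 $ 0) (at (of_real 0))"
    by (simp add: has_entrywise_derivative_def)
  from has_field_derivative_Re[OF has_vector_derivative_real_field[OF this]]
  have "((\<lambda>t. Re (evolve H t R $ 0 $ 0)) has_real_derivative Re (D $ 0 $ 0)) (at 0)"
    by (simp add: evolve_eq_propagator[OF U Hd] E_def F_def)
  moreover have "Re (D $ 0 $ 0) = 2 * Im (H $ 0 $ 1 * R $ 1 $ 0)"
    using hermitian_entry_sym[OF H, of 0 1] hermitian_entry_sym[OF R, of 1 0]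
      hermitian_diag_real[OF H, of 0] hermitian_diag_real[OF R, of 0]
    by (simp add: D_def E_def F_def propagator_0[OF U] matrix_matrix_mult_def sum_UNIV_2 mat_def)
  ultimately show ?thesis by simp
qed

lemma coh_rate_interior:
  assumes H: "hermitian H" and R: "density_matrix R"
    and p: "0 < Re (R $ 0 $ 0)" "Re (R $ 0 $ 0) < 1"
  shows "coh_rate H R = log 2 ((1 - Re (R $ 0 $ 0)) / Re (R $ 0 $ 0)) * (2 * Im (H $ 0 $ 1 * R $ 1 $ 0))"
proof -
  have "hermitian R" using R by (simp add: density_matrix_def)
  have "(binary_entropy has_real_derivative log 2 ((1 - Re (R $ 0 $ 0)) / Re (R $ 0 $ 0)))
          (at (Re (evolve H 0 R $ 0 $ 0)))"
    using binary_entropy_has_real_derivative[OF p] by (simp add: evolve_0[OF H])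
  from DERIV_chain2[OF this evolve_diag_has_real_derivative[OF H \<open>hermitian R\<close>]]
  have "((\<lambda>t. binary_entropy (Re (evolve H t R $ 0 $ 0)) - vN_entropy R) has_real_derivative
          log 2 ((1 - Re (R $ 0 $ 0)) / Re (R $ 0 $ 0)) * (2 * Im (H $ 0 $ 1 * R $ 1 $ 0)) - 0) (at 0)"
    by (rule DERIV_diff) simp
  then show ?thesis
    unfolding coh_rate_def coh_rel_evolve[OF H R] by (simp add: DERIV_imp_deriv)
qed

lemma eventually_norm_le_linear:
  assumes d: "(f has_field_derivative f') (at 0)" and f0: "f 0 = 0"
  shows "\<forall>\<^sub>F t in at (0::real). cmod (f (of_real t)) \<le> (cmod f' + 1) * \<bar>t\<bar>"
proof -
  have "((\<lambda>h. f h / h) \<longlongrightarrow> f') (at 0)" using d f0 by (simp add: DERIV_def)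
  then have "((\<lambda>h. cmod (f h / h)) \<longlongrightarrow> cmod f') (at 0)" by (rule tendsto_norm)
  then have "\<forall>\<^sub>F h in at 0. cmod (f h / h) < cmod f' + 1" by (rule order_tendstoD) simp
  then obtain \<delta> where "\<delta> > 0" and \<delta>: "\<And>h. h \<noteq> 0 \<Longrightarrow> dist h 0 < \<delta> \<Longrightarrow> cmod (f h / h) < cmod f' + 1"
    unfolding eventually_at by auto
  show ?thesis
    unfolding eventually_at
  proof (intro exI[of _ \<delta>] conjI \<open>\<delta> > 0\<close> ballI impI)
    fix t :: real assume t: "t \<noteq> 0 \<and> dist t 0 < \<delta>"
    then have "cmod (f (of_real t)) / \<bar>t\<bar> < cmod f' + 1"
      using \<delta>[of "of_real t"] by (simp add: norm_divide)
    then show "cmod (f (of_real t)) \<le> (cmod f' + 1) * \<bar>t\<bar>" using t by (simp add: field_simps)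
  qed
qed

lemma binary_entropy_norm_sq_has_real_derivative_0:
  assumes e: "(e has_field_derivative e') (at 0)" and e0: "e 0 = 0"
  shows "((\<lambda>t. binary_entropy ((cmod (e (of_real t)))\<^sup>2)) has_real_derivative 0) (at 0)"
proof (rule binary_entropy_quadratic_has_real_derivative_0)
  show "\<forall>\<^sub>F t in at 0. 0 \<le> (cmod (e (of_real t)))\<^sup>2 \<and> (cmod (e (of_real t)))\<^sup>2 \<le> (cmod e' + 1)\<^sup>2 * t\<^sup>2"
    using eventually_norm_le_linear[OF e e0]
  proof eventually_elim
    case (elim t)
    have "(cmod (e (of_real t)))\<^sup>2 \<le> ((cmod e' + 1) * \<bar>t\<bar>)\<^sup>2"
      by (rule power_mono[OF elim norm_ge_zero])
    then show ?case by (simp add: power_mult_distrib)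
  qed
qed (simp add: e0)

lemma unitary_conj_basis_diag:
  "(W ** diagm (\<lambda>i. if i = j then 1 else 0) ** adj W) $ k $ k = complex_of_real ((cmod (W $ k $ j))\<^sup>2)"
proof -
  obtain w0 w1 w2 w3 where W: "W = mat2 w0 w1 w2 w3" by (rule mat2_cases)
  have "j = 0 \<or> j = 1" "k = 0 \<or> k = 1" using UNIV_2_zero_one by auto
  then show ?thesis
    unfolding W by (auto simp: diagm_mat2 complex_norm_square simp del: of_real_power)
qed

lemma coh_rate_boundary:
  assumes H: "hermitian H" and R: "density_matrix R" and p: "Re (R $ 0 $ 0) \<in> {0, 1}"
  shows "coh_rate H R = 0"
proof -
  obtain p c where Rpc: "R = mat2 (of_real p) (cnj c) c (of_real (1 - p))" and "(cmod c)\<^sup>2 \<le> p * (1 - p)"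
    using density_matrixE[OF R] by metis
  with p have "c = 0" by auto
  obtain j k :: 2 where "k \<noteq> j" and Rj: "R = diagm (\<lambda>i. if i = j then 1 else 0)"
  proof (cases "p = 0")
    case True
    then show ?thesis using that[of 0 1] by (simp add: Rpc \<open>c = 0\<close> diagm_mat2)
  next
    case False
    with p have "p = 1" by (simp add: Rpc)
    then show ?thesis using that[of 1 0] by (simp add: Rpc \<open>c = 0\<close> diagm_mat2)
  qed
  obtain U d where U: "unitary U" and Hd: "H = U ** diagm (\<lambda>i. complex_of_real (d i)) ** adj U"
    using hermitian_diagonalizable[OF H] .
  define e where "e = (\<lambda>z. propagator U d (- \<i> * z) $ k $ j)"
  have "e 0 = 0" using \<open>k \<noteq> j\<close> by (simp add: e_def propagator_0[OF U] mat_def)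
  moreover have "(e has_field_derivative - \<i> * H $ k $ j) (at 0)"
    using propagator_has_derivative_0[OF Hd, of "- \<i>"]
    by (simp add: e_def has_entrywise_derivative_def)
  moreover have "coh_rel (evolve H t R) = binary_entropy ((cmod (e (of_real t)))\<^sup>2) - vN_entropy R" for t
  proof -
    have "evolve H t R = propagator U d (- \<i> * of_real t) ** R ** adj (propagator U d (- \<i> * of_real t))"
      by (simp add: evolve_eq_propagator[OF U Hd] adj_propagator)
    then have "evolve H t R $ k $ k = complex_of_real ((cmod (e (of_real t)))\<^sup>2)"
      by (simp add: Rj e_def unitary_conj_basis_diag)
    then show ?thesis
      using binary_entropy_diag[where k = k, OF density_matrix_evolve[OF H R, where t = t]]
      by (simp add: coh_rel_evolve[OF H R])
  qed
  ultimately have "((\<lambda>t. coh_rel (evolve H t R)) has_real_derivative 0 - 0) (at 0)"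
    by (auto intro!: derivative_eq_intros binary_entropy_norm_sq_has_real_derivative_0)
  then show ?thesis unfolding coh_rate_def by (simp add: DERIV_imp_deriv)
qed

section \<open>The maximal rate\<close>

text \<open>At \<open>p = 0\<close> and \<open>p = 1\<close> this evaluates to \<open>0\<close> (as \<open>x / 0 = 0\<close> and \<open>log 2 0 = 0\<close>), which is also
  its continuous extension.\<close>

definition cgen_profile :: "real \<Rightarrow> real \<Rightarrow> real" where
  "cgen_profile c p = 2 * c * sqrt (p * (1 - p)) * log 2 ((1 - p) / p)"

lemma cgen_profile_one_minus: "cgen_profile c (1 - p) = - cgen_profile c p"
proof -
  have "log 2 ((1 - (1 - p)) / (1 - p)) = - log 2 ((1 - p) / p)"
    by (simp flip: log_inverse)
  then show ?thesis by (simp add: cgen_profile_def mult.commute)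
qed

lemma continuous_on_cgen_profile: "continuous_on {0..1} (cgen_profile c)"
proof -
  have "continuous (at p within {0..1}) (cgen_profile c)" if p: "p \<in> {0..1}" for p
  proof -
    consider "p = 0" | "p = 1" | "0 < p" "p < 1"
      using p by fastforce
    then show ?thesis
    proof cases
      case 1
      have "((\<lambda>p. 2 * c * sqrt (p * (1 - p)) * log 2 ((1 - p) / p)) \<longlongrightarrow> 0) (at_right 0)"
        by real_asymp
      then show ?thesis
        by (simp add: 1 continuous_within at_within_Icc_at_right cgen_profile_def [abs_def])
    next
      case 2
      have "((\<lambda>p. 2 * c * sqrt (p * (1 - p)) * log 2 ((1 - p) / p)) \<longlongrightarrow> 0) (at_left 1)"
        by real_asymp
      then show ?thesis
        by (simp add: 2 continuous_within at_within_Icc_at_left cgen_profile_def [abs_def])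
    next
      case 3
      then have "isCont (cgen_profile c) p"
        unfolding cgen_profile_def [abs_def] by (intro continuous_intros) auto
      then show ?thesis by (rule continuous_at_imp_continuous_at_within)
    qed
  qed
  then show ?thesis by (simp add: continuous_on_eq_continuous_within)
qed

lemma cgen_profile_attains_max:
  obtains p0 where "0 < p0" "p0 < 1" "\<And>p. p \<in> {0..1} \<Longrightarrow> \<bar>cgen_profile c p\<bar> \<le> cgen_profile c p0"
proof -
  obtain q where q: "q \<in> {0..1}" and max: "\<And>p. p \<in> {0..1} \<Longrightarrow> cgen_profile c p \<le> cgen_profile c q"
    using continuous_attains_sup[OF compact_Icc _ continuous_on_cgen_profile] by fastforce
  have abs_le: "\<bar>cgen_profile c p\<bar> \<le> cgen_profile c q" if "p \<in> {0..1}" for p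
    using max[OF that] max[of "1 - p"] that by (auto simp: cgen_profile_one_minus)
  show ?thesis
  proof (cases "0 < q \<and> q < 1")
    case True
    then show ?thesis using that abs_le by blast
  next
    case False
    \<comment> \<open>the profile vanishes at the end points, so \<open>1/2\<close> is a maximiser as well\<close>
    then have "cgen_profile c q = cgen_profile c (1/2)" using q by (auto simp: cgen_profile_def)
    then show ?thesis using that[of "1/2"] abs_le by simp
  qed
qed

lemma coh_rate_le_cgen_profile:
  assumes H: "hermitian H" and R: "density_matrix R"
  shows "coh_rate H R \<le> \<bar>cgen_profile (cmod (H $ 1 $ 0)) (Re (R $ 0 $ 0))\<bar>"
proof -
  obtain p c where Rpc: "R = mat2 (of_real p) (cnj c) c (of_real (1 - p))"
    and "0 \<le> p" "p \<le> 1" and c: "(cmod c)\<^sup>2 \<le> p * (1 - p)"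
    using density_matrixE[OF R] by metis
  have p: "Re (R $ 0 $ 0) = p" and "R $ 1 $ 0 = c" by (simp_all add: Rpc)
  show ?thesis
  proof (cases "p = 0 \<or> p = 1")
    case True
    then have "coh_rate H R = 0" using coh_rate_boundary[OF H R] p by blast
    then show ?thesis by simp
  next
    case False
    with \<open>0 \<le> p\<close> \<open>p \<le> 1\<close> have "0 < p" "p < 1" by auto
    define L S where "L = log 2 ((1 - p) / p)" and "S = 2 * cmod (H $ 1 $ 0) * sqrt (p * (1 - p))"
    have "coh_rate H R = L * (2 * Im (H $ 0 $ 1 * c))"
      using coh_rate_interior[OF H R] \<open>0 < p\<close> \<open>p < 1\<close> unfolding p \<open>R $ 1 $ 0 = c\<close> L_def by simp
    also have "\<dots> \<le> \<bar>L\<bar> * \<bar>2 * Im (H $ 0 $ 1 * c)\<bar>"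
      by (simp only: abs_mult[symmetric] abs_ge_self)
    also have "\<dots> \<le> \<bar>L\<bar> * S"
    proof (rule mult_left_mono)
      have "\<bar>Im (H $ 0 $ 1 * c)\<bar> \<le> cmod (H $ 0 $ 1) * cmod c"
        using abs_Im_le_cmod[of "H $ 0 $ 1 * c"] by (simp add: norm_mult)
      also have "\<dots> \<le> cmod (H $ 0 $ 1) * sqrt (p * (1 - p))"
        using real_le_rsqrt[OF c] by (rule mult_left_mono) simp
      finally show "\<bar>2 * Im (H $ 0 $ 1 * c)\<bar> \<le> S"
        by (simp add: S_def hermitian_entry_sym[OF H, of 0 1])
    qed simp
    also have "\<dots> = \<bar>cgen_profile (cmod (H $ 1 $ 0)) (Re (R $ 0 $ 0))\<bar>"
      using \<open>0 < p\<close> \<open>p < 1\<close> by (simp add: p cgen_profile_def L_def S_def abs_mult)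
    finally show ?thesis .
  qed
qed

lemma density_matrix_pure_state:
  assumes "norm \<psi> = 1"
  shows "density_matrix (pure_state \<psi>)"
  unfolding density_matrix_def
proof (intro conjI allI)
  show "hermitian (pure_state \<psi>)"
    by (simp add: hermitian_def adj_def pure_state_def vec_eq_iff mult.commute)
  have "(cmod (\<psi> $ 0))\<^sup>2 + (cmod (\<psi> $ 1))\<^sup>2 = 1"
    using assms by (simp add: norm_vec_def L2_set_def sum_UNIV_2)
  moreover have "\<psi> $ 0 * cnj (\<psi> $ 0) + \<psi> $ 1 * cnj (\<psi> $ 1)
                   = of_real ((cmod (\<psi> $ 0))\<^sup>2 + (cmod (\<psi> $ 1))\<^sup>2)"
    by (simp only: of_real_add complex_norm_square)
  ultimately show "trace (pure_state \<psi>) = 1"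
    by (simp add: trace_def pure_state_def sum_UNIV_2)
  fix x :: "complex^2"
  define z where "z = cnj (x $ 0) * \<psi> $ 0 + cnj (x $ 1) * \<psi> $ 1"
  have "(\<Sum>i\<in>UNIV. \<Sum>j\<in>UNIV. cnj (x $ i) * pure_state \<psi> $ i $ j * x $ j) = z * cnj z"
    by (simp add: z_def pure_state_def sum_UNIV_2 algebra_simps)
  then show "0 \<le> Re (\<Sum>i\<in>UNIV. \<Sum>j\<in>UNIV. cnj (x $ i) * pure_state \<psi> $ i $ j * x $ j)"
    by (simp add: complex_mult_cnj)
qed

lemma pure_state_attains_cgen_profile:
  assumes H: "hermitian H" and p: "0 < p" "p < 1"
  obtains \<psi> where "norm \<psi> = 1" "coh_rate H (pure_state \<psi>) = cgen_profile (cmod (H $ 1 $ 0)) p"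
proof -
  define h where "h = H $ 0 $ 1"
  \<comment> \<open>the relative phase \<open>w\<close> of the two amplitudes is chosen to make \<open>Im (h * w)\<close> maximal\<close>
  define w where "w = (if h = 0 then 1 else \<i> * cnj h / of_real (cmod h))"
  have "cmod w = 1" by (simp add: w_def norm_divide norm_mult)
  have hw: "Im (h * w) = cmod h"
  proof (cases "h = 0")
    case False
    then have "h * w = \<i> * of_real ((cmod h)\<^sup>2 / cmod h)"
      by (simp add: w_def complex_norm_square del: of_real_power)
    then show ?thesis by (simp add: power2_eq_square)
  qed (simp add: w_def)
  define \<psi> :: "complex^2" where "\<psi> = (\<chi> i. if i = 0 then of_real (sqrt p) else w * of_real (sqrt (1 - p)))"
  have "norm \<psi> = 1"
    using p \<open>cmod w = 1\<close> by (simp add: \<psi>_def norm_vec_def L2_set_def sum_UNIV_2 norm_mult)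
  moreover have "coh_rate H (pure_state \<psi>) = cgen_profile (cmod (H $ 1 $ 0)) p"
  proof -
    have "Re (pure_state \<psi> $ 0 $ 0) = p" using p by (simp add: \<psi>_def pure_state_def)
    moreover have "H $ 0 $ 1 * pure_state \<psi> $ 1 $ 0 = (h * w) * of_real (sqrt (p * (1 - p)))"
      by (simp add: \<psi>_def pure_state_def h_def real_sqrt_mult mult_ac)
    then have "Im (H $ 0 $ 1 * pure_state \<psi> $ 1 $ 0) = Im (h * w) * sqrt (p * (1 - p))"
      by simp
    then have "Im (H $ 0 $ 1 * pure_state \<psi> $ 1 $ 0) = sqrt (p * (1 - p)) * cmod h"
      unfolding hw by (simp only: mult.commute)
    ultimately show ?thesis
      using coh_rate_interior[OF H density_matrix_pure_state[OF \<open>norm \<psi> = 1\<close>]] p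
      by (simp add: cgen_profile_def h_def hermitian_entry_sym[OF H, of 0 1] mult_ac)
  qed
  ultimately show ?thesis by (rule that)
qed

theorem mainTheorem3:
  fixes H :: "complex^2^2"
  assumes "hermitian H"
  defines "g \<equiv> (\<lambda>p::real. 2 * cmod (H $ 1 $ 0) * sqrt (p * (1 - p)) * log 2 ((1 - p) / p))"
  shows "(\<exists>p\<in>{0..1}. g p = C_gen H) \<and> (\<forall>p\<in>{0..1}. g p \<le> C_gen H)
         \<and> (\<forall>\<rho>. density_matrix \<rho> \<longrightarrow> coh_rate H \<rho> \<le> C_gen H)
         \<and> (\<exists>\<psi>. norm \<psi> = 1 \<and> density_matrix (pure_state \<psi>) \<and> coh_rate H (pure_state \<psi>) = C_gen H)"
proof -
  have g: "g = cgen_profile (cmod (H $ 1 $ 0))" by (simp add: g_def cgen_profile_def [abs_def])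
  obtain p0 where p0: "0 < p0" "p0 < 1" and max: "\<And>p. p \<in> {0..1} \<Longrightarrow> \<bar>g p\<bar> \<le> g p0"
    using cgen_profile_attains_max[of "cmod (H $ 1 $ 0)"] unfolding g by blast
  obtain \<psi> where \<psi>: "norm \<psi> = 1" "coh_rate H (pure_state \<psi>) = g p0"
    using pure_state_attains_cgen_profile[OF \<open>hermitian H\<close> p0] unfolding g by blast
  have rate_le: "coh_rate H \<rho> \<le> g p0" if \<rho>: "density_matrix \<rho>" for \<rho>
  proof -
    obtain p c where "\<rho> = mat2 (of_real p) (cnj c) c (of_real (1 - p))" "0 \<le> p" "p \<le> 1"
      using density_matrixE[OF \<rho>] by metis
    then have "\<bar>g (Re (\<rho> $ 0 $ 0))\<bar> \<le> g p0" by (intro max) simp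
    with coh_rate_le_cgen_profile[OF \<open>hermitian H\<close> \<rho>] show ?thesis by (simp add: g)
  qed
  have C_gen: "C_gen H = g p0"
    unfolding C_gen_def
  proof (rule cSup_eq_maximum)
    show "g p0 \<in> {coh_rate H \<rho> |\<rho>. density_matrix \<rho>}"
      using density_matrix_pure_state[OF \<psi>(1)] \<psi>(2) by force
  qed (use rate_le in blast)
  show ?thesis
  proof (intro conjI)
    show "\<exists>p\<in>{0..1}. g p = C_gen H" using p0 C_gen by auto
    show "\<forall>p\<in>{0..1}. g p \<le> C_gen H" using max C_gen by (metis abs_ge_self order_trans)
    show "\<forall>\<rho>. density_matrix \<rho> \<longrightarrow> coh_rate H \<rho> \<le> C_gen H" using rate_le C_gen by simp
    show "\<exists>\<psi>. norm \<psi> = 1 \<and> density_matrix (pure_state \<psi>) \<and> coh_rate H (pure_state \<psi>) = C_gen H"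
      using \<psi> density_matrix_pure_state C_gen by auto
  qed
qed

end
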